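(* Let $R$ be a locally stable commutative ring. Then every stably free $R$-module is free; equivalently, for all $n$ and $a_1,\dots,a_n\in R$ with $a_1R+\cdots+a_nR=R$, the row $(a_1,\dots,a_n)$ is the first row of an invertible $n\times n$ matrix over $R$.
   Context: All rings are commutative with identity. An $R$-module $P$ is stably free if $P\oplus R^m\cong R^n$ for some $m,n\in\mathbb{N}$. A ring $S$ has stable range 1 if whenever $aS+bS=S$ there is $y\in S$ with $a+by$ a unit. $R$ is locally stable if whenever $a,b\in R$ with $aR+bR=R$ there is $y\in R$ such that $R/(a+by)R$ has stable range 1. *)

theory Defs
  imports Main "Jordan_Normal_Form.Matrix"
begin

text \<open>The quotient ring R/cR has stable range 1, written out in R:
  a comaximal pair (a + cR, b + cR) in R/cR, i.e. aR + bR + cR = R, admits y such that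
  a + b y is a unit modulo cR.\<close>
definition quot_stable_range_1 :: "'a::comm_ring_1 \<Rightarrow> bool" where
  "quot_stable_range_1 c \<longleftrightarrow>
     (\<forall>a b. (\<exists>x y z. a * x + b * y + c * z = 1) \<longrightarrow>
            (\<exists>y u w. (a + b * y) * u + c * w = 1))"

definition locally_stable :: "'a::comm_ring_1 itself \<Rightarrow> bool" where
  "locally_stable TYPE('a) \<longleftrightarrow>
     (\<forall>a b :: 'a. (\<exists>x y. a * x + b * y = 1) \<longrightarrow> (\<exists>y. quot_stable_range_1 (a + b * y)))"

end

theory Submission
  imports Defs
begin

text \<open>Adding to one entry of a row a linear combination of the other entries is right
  multiplication by an invertible matrix, so it preserves being the first row of an invertible
  matrix. For a unimodular row \<open>a\<close> with \<open>a 0 * x 0 + B = 1\<close>, local stability replaces \<open>a 0\<close>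
  by \<open>c = a 0 + B * y\<close> such that \<open>R/cR\<close> has stable range 1. The new row is still unimodular,
  so modulo \<open>c\<close> the pair \<open>(a 1, b)\<close>, with \<open>b\<close> a combination of the remaining entries, is
  unimodular, and stable range 1 replaces \<open>a 1\<close> by some \<open>d\<close> with \<open>c * w + d * u = 1\<close>. The
  resulting row is the first row of the invertible block matrix
  \<open>[[c, d, a 2, \<dots>], [-u, w, 0, \<dots>], [0, 0, I]]\<close>.\<close>

lemma invertible_matI:
  assumes "A \<in> carrier_mat n n" "B \<in> carrier_mat n n" "A * B = 1\<^sub>m n" "B * A = 1\<^sub>m n"
  shows "invertible_mat A"
  unfolding invertible_mat_def inverts_mat_def using assms by auto

lemma invertible_matE:
  assumes "invertible_mat A" "A \<in> carrier_mat n n"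
  obtains B where "B \<in> carrier_mat n n" "A * B = 1\<^sub>m n" "B * A = 1\<^sub>m n"
proof -
  from assms obtain B where AB: "A * B = 1\<^sub>m n" and BA: "B * A = 1\<^sub>m (dim_row B)"
    unfolding invertible_mat_def inverts_mat_def by auto
  have "dim_row B = n" "dim_col B = n"
    using arg_cong[OF AB, of dim_col] arg_cong[OF BA, of dim_col] assms(2) by auto
  with AB BA that show thesis by auto
qed

lemma invertible_mult_mat:
  assumes A: "A \<in> carrier_mat n n" "invertible_mat A" and B: "B \<in> carrier_mat n n" "invertible_mat B"
  shows "invertible_mat (A * B)"
proof -
  obtain A' where A': "A' \<in> carrier_mat n n" "A * A' = 1\<^sub>m n" "A' * A = 1\<^sub>m n"
    using invertible_matE[OF A(2,1)] .
  obtain B' where B': "B' \<in> carrier_mat n n" "B * B' = 1\<^sub>m n" "B' * B = 1\<^sub>m n"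
    using invertible_matE[OF B(2,1)] .
  have "(A * B) * (B' * A') = A * ((B * B') * A')"
    using A(1) B(1) A'(1) B'(1) by (simp add: assoc_mult_mat[of _ n n _ n _ n])
  also have "\<dots> = 1\<^sub>m n"
    using A A' B' by simp
  finally have right: "(A * B) * (B' * A') = 1\<^sub>m n" .
  have "(B' * A') * (A * B) = B' * ((A' * A) * B)"
    using A(1) B(1) A'(1) B'(1) by (simp add: assoc_mult_mat[of _ n n _ n _ n])
  also have "\<dots> = 1\<^sub>m n"
    using A' B B' by simp
  finally have left: "(B' * A') * (A * B) = 1\<^sub>m n" .
  show ?thesis
    using A B A' B' left right by (intro invertible_matI[of _ n "B' * A'"]) auto
qed

lemma invertible_four_block_mat_upper:
  fixes M :: "'a::comm_ring_1 mat"
  assumes M: "M \<in> carrier_mat k k" "invertible_mat M" and B: "B \<in> carrier_mat k m"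
  shows "invertible_mat (four_block_mat M B (0\<^sub>m m k) (1\<^sub>m m))"
proof -
  obtain M' where M': "M' \<in> carrier_mat k k" "M * M' = 1\<^sub>m k" "M' * M = 1\<^sub>m k"
    using invertible_matE[OF M(2,1)] .
  have MB: "M * (M' * B) = B"
    using M(1) M' B by (simp flip: assoc_mult_mat[of _ k k _ k _ m])
  have zero: "- 0\<^sub>m m m = (0\<^sub>m m m :: 'a mat)" "M' * B + - (M' * B) = 0\<^sub>m k m"
    using M'(1) B by auto
  show ?thesis
  proof (rule invertible_matI[of _ "k + m" "four_block_mat M' (- (M' * B)) (0\<^sub>m m k) (1\<^sub>m m)"])
    show "four_block_mat M B (0\<^sub>m m k) (1\<^sub>m m) * four_block_mat M' (- (M' * B)) (0\<^sub>m m k) (1\<^sub>m m)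
        = 1\<^sub>m (k + m)"
      using M(1) M' B MB zero
      by (simp add: mult_four_block_mat[OF M(1) B zero_carrier_mat one_carrier_mat
            M'(1) _ zero_carrier_mat one_carrier_mat])
    show "four_block_mat M' (- (M' * B)) (0\<^sub>m m k) (1\<^sub>m m) * four_block_mat M B (0\<^sub>m m k) (1\<^sub>m m)
        = 1\<^sub>m (k + m)"
      using M(1) M' B zero
      by (simp add: mult_four_block_mat[OF M'(1) _ zero_carrier_mat one_carrier_mat
            M(1) B zero_carrier_mat one_carrier_mat])
  qed (use M(1) M'(1) B in auto)
qed

definition add_col_mat :: "nat \<Rightarrow> nat \<Rightarrow> (nat \<Rightarrow> 'a) \<Rightarrow> 'a::comm_ring_1 mat" where
  "add_col_mat n k t = mat n n (\<lambda>(i, j). (if i = j then 1 else 0) + (if j = k then t i else 0))"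

lemma add_col_mat_carrier [simp]: "add_col_mat n k t \<in> carrier_mat n n"
  by (simp add: add_col_mat_def)

lemma index_mult_add_col_mat:
  assumes "A \<in> carrier_mat m n" "i < m" "j < n"
  shows "(A * add_col_mat n k t) $$ (i, j) =
    A $$ (i, j) + (if j = k then (\<Sum>l<n. A $$ (i, l) * t l) else 0)"
proof -
  have "(A * add_col_mat n k t) $$ (i, j) =
      (\<Sum>l<n. A $$ (i, l) * (if l = j then 1 else 0)) + (\<Sum>l<n. A $$ (i, l) * (if j = k then t l else 0))"
    using assms by (simp add: add_col_mat_def scalar_prod_def lessThan_atLeast0 distrib_left sum.distrib)
  then show ?thesis
    using assms by (simp add: if_distrib[of "times _"] cong: if_cong)
qed

lemma add_col_mat_mult:
  assumes "s k = 0"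
  shows "add_col_mat n k t * add_col_mat n k s = add_col_mat n k (\<lambda>i. t i + s i)"
proof (rule eq_matI)
  fix i j
  assume "i < dim_row (add_col_mat n k (\<lambda>i. t i + s i))" "j < dim_col (add_col_mat n k (\<lambda>i. t i + s i))"
  then have ij: "i < n" "j < n" by (auto simp: add_col_mat_def)
  have "(\<Sum>l<n. add_col_mat n k t $$ (i, l) * s l) = s i"
    using ij assms
    by (simp add: add_col_mat_def distrib_right sum.distrib if_distrib[of "\<lambda>x. x * _"] cong: if_cong)
  then show "(add_col_mat n k t * add_col_mat n k s) $$ (i, j) =
      add_col_mat n k (\<lambda>i. t i + s i) $$ (i, j)"
    using ij by (simp add: index_mult_add_col_mat[OF add_col_mat_carrier ij]) (auto simp: add_col_mat_def)
qed (auto simp: add_col_mat_def)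

lemma add_col_mat_zero: "add_col_mat n k (\<lambda>_. 0) = 1\<^sub>m n"
  by (rule eq_matI) (auto simp: add_col_mat_def)

lemma invertible_add_col_mat:
  assumes "t k = 0"
  shows "invertible_mat (add_col_mat n k t)"
  using add_col_mat_mult[of "\<lambda>i. - t i" k n t] add_col_mat_mult[of t k n "\<lambda>i. - t i"] assms
  by (intro invertible_matI[of _ n "add_col_mat n k (\<lambda>i. - t i)"]) (simp_all add: add_col_mat_zero)

definition completable :: "nat \<Rightarrow> (nat \<Rightarrow> 'a::comm_ring_1) \<Rightarrow> bool" where
  "completable n v \<longleftrightarrow> (\<exists>A \<in> carrier_mat n n. invertible_mat A \<and> (\<forall>j<n. A $$ (0, j) = v j))"

lemma completable_add_col:
  assumes "completable n v" "k < n" "t k = 0"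
    and "\<And>j. j < n \<Longrightarrow> w j = v j + (if j = k then (\<Sum>i<n. v i * t i) else 0)"
  shows "completable n w"
proof -
  from assms(1) obtain A where A: "A \<in> carrier_mat n n" "invertible_mat A" "\<forall>j<n. A $$ (0, j) = v j"
    unfolding completable_def by blast
  have "(A * add_col_mat n k t) $$ (0, j) = w j" if "j < n" for j
    using that assms(2,4) A by (simp add: index_mult_add_col_mat[OF A(1)])
  moreover have "invertible_mat (A * add_col_mat n k t)"
    using A assms(3) by (simp add: invertible_mult_mat invertible_add_col_mat)
  ultimately show ?thesis
    unfolding completable_def using A(1) by (intro bexI[of _ "A * add_col_mat n k t"]) auto
qed

lemma completable_extend:
  assumes "completable k v" "0 < k" "k \<le> n"
  shows "completable n v"
proof -
  from assms(1) obtain M where M: "M \<in> carrier_mat k k" "invertible_mat M" "\<forall>j<k. M $$ (0, j) = v j"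
    unfolding completable_def by blast
  define B where "B = mat k (n - k) (\<lambda>(i, j). if i = 0 then v (k + j) else 0)"
  define A where "A = four_block_mat M B (0\<^sub>m (n - k) k) (1\<^sub>m (n - k))"
  have "A \<in> carrier_mat n n"
    using M(1) assms(3) unfolding A_def by (intro carrier_matI) auto
  moreover have "invertible_mat A"
    unfolding A_def using M by (intro invertible_four_block_mat_upper) (auto simp: B_def)
  moreover have "A $$ (0, j) = v j" if "j < n" for j
    using that M assms(2,3) by (simp add: A_def B_def)
  ultimately show ?thesis
    unfolding completable_def by blast
qed

lemma completable_one:
  assumes "v 0 * x = 1"
  shows "completable 1 v"
proof -
  have "mat 1 1 (\<lambda>_. v 0) * mat 1 1 (\<lambda>_. x) = 1\<^sub>m 1"
    "mat 1 1 (\<lambda>_. x) * mat 1 1 (\<lambda>_. v 0) = 1\<^sub>m 1"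
    using assms by (auto simp: scalar_prod_def mult.commute)
  then show ?thesis
    unfolding completable_def by (intro bexI[of _ "mat 1 1 (\<lambda>_. v 0)"] conjI invertible_matI) auto
qed

lemma completable_two:
  assumes "v 0 * x + v 1 * y = 1"
  shows "completable 2 v"
proof -
  define A where "A = mat 2 2 (\<lambda>(i, j). if i = 0 then v j else if j = 0 then - y else x)"
  define A' where
    "A' = mat 2 2 (\<lambda>(i, j). if i = 0 then (if j = 0 then x else - v 1) else (if j = 0 then y else v 0))"
  have "A * A' = 1\<^sub>m 2" "A' * A = 1\<^sub>m 2"
    using assms by (auto simp: A_def A'_def scalar_prod_def numeral_2_eq_2 less_Suc_eq algebra_simps)
  then show ?thesis
    unfolding completable_def by (intro bexI[of _ A] conjI invertible_matI[of _ 2 A']) (auto simp: A_def A'_def)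
qed

lemma completable_if_quot_stable_range_1:
  fixes v x :: "nat \<Rightarrow> 'a::comm_ring_1"
  assumes n: "2 \<le> n" and sr: "quot_stable_range_1 (v 0)" and unimodular: "(\<Sum>i<n. v i * x i) = 1"
  shows "completable n v"
proof -
  obtain m where m: "n = Suc (Suc m)"
    using n by (metis add_2_eq_Suc le_Suc_ex)
  define t where "t i = (if 2 \<le> i then x i else 0)" for i
  define b where "b = (\<Sum>i<n. v i * t i)"
  have "v 1 * x 1 + b * 1 + v 0 * x 0 = 1"
    using unimodular unfolding m b_def t_def sum.lessThan_Suc_shift by (simp add: algebra_simps)
  then obtain y u w where "(v 1 + b * y) * u + v 0 * w = 1"
    using sr unfolding quot_stable_range_1_def by (metis (no_types))
  then have "completable 2 (v(1 := v 1 + b * y))"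
    by (intro completable_two[of _ w u]) (simp add: algebra_simps)
  then have reduced: "completable n (v(1 := v 1 + b * y))"
    by (rule completable_extend) (simp_all add: n)
  have undo: "(\<Sum>i<n. (v(1 := v 1 + b * y)) i * - (y * t i)) = - (y * b)"
    unfolding b_def sum_distrib_left sum_negf[symmetric] by (rule sum.cong) (auto simp: t_def)
  show ?thesis
    by (rule completable_add_col[OF reduced, of 1 "\<lambda>i. - (y * t i)"])
      (use n undo in \<open>auto simp: t_def\<close>)
qed

lemma completable_if_locally_stable:
  fixes a x :: "nat \<Rightarrow> 'a::comm_ring_1"
  assumes ls: "locally_stable TYPE('a)" and n: "2 \<le> n" and unimodular: "(\<Sum>i<n. a i * x i) = 1"
  shows "completable n a"
proof -
  obtain m where m: "n = Suc m"
    using n by (cases n) simp_all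
  define t where "t i = (if i = 0 then 0 else x i)" for i
  define B where "B = (\<Sum>i<n. a i * t i)"
  have B_unimodular: "a 0 * x 0 + B * 1 = 1"
    using unimodular unfolding m B_def t_def sum.lessThan_Suc_shift by simp
  then obtain y where sr: "quot_stable_range_1 (a 0 + B * y)"
    using ls unfolding locally_stable_def by blast
  define c where "c = a 0 + B * y"
  define x' where "x' i = (if i = 0 then x 0 else x i * (1 - y * x 0))" for i
  have "(\<Sum>i<n. (a(0 := c)) i * x' i) = c * x 0 + B * (1 - y * x 0)"
    unfolding m B_def t_def x'_def sum.lessThan_Suc_shift by (simp add: sum_distrib_right mult.assoc)
  also have "\<dots> = 1"
    using B_unimodular by (simp add: c_def algebra_simps)
  finally have "(\<Sum>i<n. (a(0 := c)) i * x' i) = 1" .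
  then have reduced: "completable n (a(0 := c))"
    using n sr by (intro completable_if_quot_stable_range_1[of n _ x']) (simp_all add: c_def)
  have undo: "(\<Sum>i<n. (a(0 := c)) i * - (y * t i)) = - (y * B)"
    unfolding B_def sum_distrib_left sum_negf[symmetric] by (rule sum.cong) (auto simp: t_def)
  show ?thesis
    by (rule completable_add_col[OF reduced, of 0 "\<lambda>i. - (y * t i)"])
      (use n undo in \<open>auto simp: t_def c_def\<close>)
qed

theorem proposition4p5:
  fixes a :: "nat \<Rightarrow> 'a::comm_ring_1" and n :: nat
  assumes "locally_stable TYPE('a)"
    and "\<exists>x. (\<Sum>i<n. a i * x i) = 1"
  shows "\<exists>A \<in> carrier_mat n n. invertible_mat A \<and> (\<forall>j<n. A $$ (0, j) = a j)"
proof -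
  obtain x where x: "(\<Sum>i<n. a i * x i) = 1"
    using assms(2) by blast
  consider "n = 0" | "n = 1" | "2 \<le> n"
    by linarith
  then have "completable n a"
  proof cases
    case 1
    then show ?thesis
      unfolding completable_def
      by (intro bexI[of _ "1\<^sub>m 0"] conjI invertible_matI[of _ 0 "1\<^sub>m 0"]) auto
  next
    case 2
    then show ?thesis
      using x completable_one[of a "x 0"] by simp
  next
    case 3
    then show ?thesis
      using completable_if_locally_stable[OF assms(1) _ x] by simp
  qed
  then show ?thesis
    unfolding completable_def .
qed

end
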